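(* Let $p\equiv 1\pmod 4$ be a prime and $\ell\ge 2$ an integer, and put $d=\ell(\ell-1)/2$. Let $Y_0\subset \mathbb{A}^\ell\times\mathbb{A}^d$ be the set of points $(r_1,\ldots,r_\ell,(y_{ij})_{1\le j<i\le \ell})$ satisfying $$r_i-r_j=y_{ij}^2\quad (1\le j<i\le \ell),\qquad y_{ij}\ne 0 \text{ for all } 1\le j<i\le\ell.$$ Then $$n_p(K_\ell)=2^{-d}(\ell!)^{-1}p^{-1}\,|Y_0(\mathbb{F}_p)|.$$
   Context: For $p\equiv 1\pmod 4$ and an $\ell$-tuple $A=(r_1,\ldots,r_\ell)$ of pairwise distinct residues modulo $p$, let $\Gamma_A$ be the graph on vertices $v_1,\ldots,v_\ell$ with $v_i,v_j$ joined by an edge iff $r_i-r_j$ is a nonzero quadratic residue mod $p$ (symmetric since $-1$ is a square). Two tuples are identified if they differ by a permutation of entries or by adding the same residue $a$ to all entries. For a graph $\Gamma$ on $\ell$ vertices, $n_p(\Gamma)$ is the number of such classes of tuples $A$ with $\Gamma_A$ isomorphic to $\Gamma$. $K_\ell$ is the complete graph on $\ell$ vertices. *)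

theory Defs
  imports "HOL-Number_Theory.Number_Theory"
begin

text \<open>Graphs on the vertex set {0..<l} are given by an edge relation
  (only its values on {0..<l} matter).\<close>

definition graph_iso :: "nat \<Rightarrow> (nat \<Rightarrow> nat \<Rightarrow> bool) \<Rightarrow> (nat \<Rightarrow> nat \<Rightarrow> bool) \<Rightarrow> bool" where
  "graph_iso l E F \<longleftrightarrow> (\<exists>f. bij_betw f {0..<l} {0..<l} \<and>
      (\<forall>i\<in>{0..<l}. \<forall>j\<in>{0..<l}. E i j \<longleftrightarrow> F (f i) (f j)))"

definition complete_graph :: "nat \<Rightarrow> nat \<Rightarrow> bool" where
  "complete_graph i j \<longleftrightarrow> i \<noteq> j"

definition tuples :: "int \<Rightarrow> nat \<Rightarrow> (nat \<Rightarrow> int) set" where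
  "tuples p l = {r. (\<forall>i<l. r i \<in> {0..<p}) \<and> (\<forall>i\<ge>l. r i = 0) \<and> inj_on r {0..<l}}"

definition tuple_graph :: "int \<Rightarrow> (nat \<Rightarrow> int) \<Rightarrow> nat \<Rightarrow> nat \<Rightarrow> bool" where
  "tuple_graph p r i j \<longleftrightarrow> i \<noteq> j \<and> \<not> p dvd (r i - r j) \<and> QuadRes p (r i - r j)"

definition tuple_rel :: "int \<Rightarrow> nat \<Rightarrow> ((nat \<Rightarrow> int) \<times> (nat \<Rightarrow> int)) set" where
  "tuple_rel p l = {(r, s). r \<in> tuples p l \<and> s \<in> tuples p l \<and>
      (\<exists>\<sigma> a. bij_betw \<sigma> {0..<l} {0..<l} \<and> (\<forall>i<l. s i = (r (\<sigma> i) + a) mod p))}"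

definition n_p :: "int \<Rightarrow> nat \<Rightarrow> (nat \<Rightarrow> nat \<Rightarrow> bool) \<Rightarrow> nat" where
  "n_p p l \<Gamma> = card {C \<in> tuples p l // tuple_rel p l. \<exists>r\<in>C. graph_iso l (tuple_graph p r) \<Gamma>}"

definition Y0_points :: "int \<Rightarrow> nat \<Rightarrow> ((nat \<Rightarrow> int) \<times> (nat \<Rightarrow> nat \<Rightarrow> int)) set" where
  "Y0_points p l = {(r, y).
      (\<forall>i<l. r i \<in> {0..<p}) \<and> (\<forall>i\<ge>l. r i = 0) \<and>
      (\<forall>i j. (j < i \<and> i < l) \<longrightarrow> y i j \<in> {0..<p}) \<and>
      (\<forall>i j. \<not> (j < i \<and> i < l) \<longrightarrow> y i j = 0) \<and>
      (\<forall>i j. j < i \<and> i < l \<longrightarrow> [r i - r j = (y i j)^2] (mod p) \<and> \<not> [y i j = 0] (mod p))}"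

end

theory Submission
  imports Defs "HOL-Combinatorics.Permutations"
begin

(* Since p = 1 (mod 4), -1 is a square mod p, so a tuple r lies under a point of Y_0 iff all
   differences r_i - r_j (i <> j) are nonzero squares, i.e. iff r is a clique of the Paley graph,
   i.e. iff Gamma_r = K_l; the fibre over such r has 2^d points, two nonzero square roots for each
   pair j < i. The group S_l x F_p acts freely on Paley cliques: if translation by b <> 0 permuted
   the entries of r, their set would be closed under adding b, hence all of F_p, and would contain
   two entries differing by a non-residue. So every class counted by n_p(K_l) has l! p elements. *)

section \<open>Quadratic residues modulo a prime\<close>

lemma QuadRes_cong:
  assumes "QuadRes p a" "[a = b] (mod p)"
  shows "QuadRes p b"
  using assms cong_trans unfolding QuadRes_def by blast

lemma QuadRes_mult:
  assumes "QuadRes p a" "QuadRes p b"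
  shows "QuadRes p (a * b)"
proof -
  obtain x y where "[x^2 = a] (mod p)" "[y^2 = b] (mod p)"
    using assms unfolding QuadRes_def by blast
  then have "[(x * y)^2 = a * b] (mod p)"
    by (simp add: power_mult_distrib cong_mult)
  then show ?thesis
    unfolding QuadRes_def by blast
qed

lemma QuadRes_minus_one:
  fixes p :: int
  assumes "prime p" "[p = 1] (mod 4)"
  shows "QuadRes p (-1)"
proof (rule ccontr)
  assume not_QR: "\<not> QuadRes p (-1)"
  define k where "k = p div 4"
  have k: "p = 4 * k + 1"
    using assms(2) unfolding cong_def k_def by presburger
  have "p > 2"
    using prime_gt_1_int[OF assms(1)] k by presburger
  have exponent: "(nat p - 1) div 2 = 2 * nat k"
    using k \<open>p > 2\<close> by linarith
  have "[Legendre (-1) p = (-1) ^ ((nat p - 1) div 2)] (mod p)"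
    using euler_criterion[of "nat p" "-1"] assms(1) \<open>p > 2\<close> by simp
  then have "[Legendre (-1) p = 1] (mod p)"
    unfolding exponent by (simp add: power_mult)
  moreover have "\<not> [-1 = 0] (mod p)"
    using \<open>p > 2\<close> by (simp add: cong_def zmod_minus1)
  ultimately have "[-1 = 1] (mod p)"
    using not_QR by (simp add: Legendre_def)
  then have "p dvd 2"
    by (simp add: cong_iff_dvd_diff)
  then show False
    using \<open>p > 2\<close> zdvd_imp_le by fastforce
qed

lemma squares_mod_prime_psubset:
  fixes p :: int
  assumes "prime p" "p > 2"
  shows "(\<lambda>x. x^2 mod p) ` {1..p - 1} \<subset> {1..p - 1}"
proof
  show "(\<lambda>x. x^2 mod p) ` {1..p - 1} \<subseteq> {1..p - 1}"
  proof clarify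
    fix x assume "x \<in> {1..p - 1}"
    then have "\<not> p dvd x^2"
      using assms(1) zdvd_not_zless[of x p] by (auto simp: prime_dvd_power_iff)
    then have "x^2 mod p \<noteq> 0"
      by (simp add: dvd_eq_mod_eq_0)
    moreover have "0 \<le> x^2 mod p" "x^2 mod p < p"
      using assms(2) by simp_all
    ultimately show "x^2 mod p \<in> {1..p - 1}"
      by simp
  qed
  have "(p - 1)^2 = 1 + p * (p - 2)"
    by (simp add: power2_eq_square algebra_simps)
  then have "1^2 mod p = (p - 1)^2 mod p"
    by simp
  moreover have "1 \<in> {1..p - 1}" "p - 1 \<in> {1..p - 1}" "1 \<noteq> p - 1"
    using assms(2) by auto
  ultimately have "\<not> inj_on (\<lambda>x. x^2 mod p) {1..p - 1}"
    unfolding inj_on_def by blast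
  then show "(\<lambda>x. x^2 mod p) ` {1..p - 1} \<noteq> {1..p - 1}"
    using finite_surj_inj[of "{1..p - 1}" "\<lambda>x. x^2 mod p"] by auto
qed

lemma ex_not_QuadRes:
  fixes p :: int
  assumes "prime p" "p > 2"
  obtains n where "0 < n" "n < p" "\<not> QuadRes p n"
proof -
  obtain n where n: "n \<in> {1..p - 1}" "n \<notin> (\<lambda>x. x^2 mod p) ` {1..p - 1}"
    using squares_mod_prime_psubset[OF assms] by blast
  have "\<not> QuadRes p n"
  proof
    assume "QuadRes p n"
    then obtain y where "[y^2 = n] (mod p)"
      unfolding QuadRes_def by blast
    then have sq: "(y mod p)^2 mod p = n"
      using n(1) unfolding cong_def by (simp add: power_mod)
    have "y mod p \<noteq> 0"
    proof
      assume "y mod p = 0"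
      with sq n(1) show False
        by simp
    qed
    moreover have "0 \<le> y mod p" "y mod p < p"
      using assms(2) by simp_all
    ultimately have "y mod p \<in> {1..p - 1}"
      by simp
    then show False
      using n(2) sq by blast
  qed
  moreover have "0 < n" "n < p"
    using n(1) by auto
  ultimately show ?thesis
    using that by blast
qed

lemma card_square_roots_mod_prime:
  fixes p c :: int
  assumes "prime p" "p > 2" "QuadRes p c" "\<not> p dvd c"
  shows "card {y \<in> {0..<p}. [y^2 = c] (mod p)} = 2"
proof -
  obtain y where "[y^2 = c] (mod p)"
    using assms(3) unfolding QuadRes_def by blast
  define u where "u = y mod p"
  have u_root: "[u^2 = c] (mod p)"
    using \<open>[y^2 = c] (mod p)\<close> unfolding u_def cong_def by (simp add: power_mod)
  have "u \<noteq> 0"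
    using u_root assms(4) by (auto simp: cong_def dvd_eq_mod_eq_0)
  moreover have "0 \<le> u" "u < p"
    using assms(2) by (simp_all add: u_def)
  ultimately have u: "0 < u" "u < p"
    by simp_all
  have "[(p - u)^2 = u^2] (mod p)"
    by (simp add: cong_iff_dvd_diff power2_eq_square algebra_simps)
  then have minus_u_root: "[(p - u)^2 = c] (mod p)"
    using u_root cong_trans by blast
  have "u \<noteq> p - u"
    using prime_odd_int[OF assms(1,2)] by presburger
  have "{y \<in> {0..<p}. [y^2 = c] (mod p)} = {u, p - u}"
  proof (intro equalityI subsetI)
    fix x assume x: "x \<in> {y \<in> {0..<p}. [y^2 = c] (mod p)}"
    then have "[x^2 = u^2] (mod p)"
      using u_root cong_sym cong_trans by blast
    then have "p dvd (x - u) * (x + u)"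
      by (simp add: cong_iff_dvd_diff power2_eq_square algebra_simps)
    then have "p dvd x - u \<or> p dvd x + u"
      using assms(1) prime_dvd_mult_iff by blast
    then have "p dvd x - u \<or> p dvd (x + u) - p"
      using dvd_diff dvd_refl by blast
    then have "[x = u] (mod p) \<or> [x = p - u] (mod p)"
      by (simp add: cong_iff_dvd_diff algebra_simps)
    then show "x \<in> {u, p - u}"
      using x u cong_less_imp_eq_int[of x p] by auto
  qed (use u u_root minus_u_root in auto)
  then show ?thesis
    using \<open>u \<noteq> p - u\<close> by simp
qed

section \<open>Elementary counting\<close>

lemma card_pairs_below: "card {(i, j). j < i \<and> i < l} = l * (l - 1) div 2"
proof -
  have "{(i, j). j < i \<and> i < l} = Sigma {..<l} (\<lambda>i. {..<i})"
    by auto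
  then have "card {(i, j). j < i \<and> i < l} = (\<Sum>i<l. i)"
    by simp
  then show ?thesis
    by (simp add: Sum_Ico_nat lessThan_atLeast0)
qed

lemma funs_with_default_eq_image_PiE:
  "{f. (\<forall>x\<in>A. f x \<in> B x) \<and> (\<forall>x. x \<notin> A \<longrightarrow> f x = d)} =
     (\<lambda>f x. if x \<in> A then f x else d) ` PiE A B"
proof (intro equalityI subsetI)
  fix f assume f: "f \<in> {f. (\<forall>x\<in>A. f x \<in> B x) \<and> (\<forall>x. x \<notin> A \<longrightarrow> f x = d)}"
  then have "f = (\<lambda>x. if x \<in> A then restrict f A x else d)"
    by auto
  moreover have "restrict f A \<in> PiE A B"
    using f by auto
  ultimately show "f \<in> (\<lambda>f x. if x \<in> A then f x else d) ` PiE A B"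
    by blast
qed auto

lemma finite_funs_with_default:
  assumes "finite A" "\<And>x. x \<in> A \<Longrightarrow> finite (B x)"
  shows "finite {f. (\<forall>x\<in>A. f x \<in> B x) \<and> (\<forall>x. x \<notin> A \<longrightarrow> f x = d)}"
  unfolding funs_with_default_eq_image_PiE using assms by (intro finite_imageI finite_PiE)

lemma card_funs_with_default:
  assumes "finite A"
  shows "card {f. (\<forall>x\<in>A. f x \<in> B x) \<and> (\<forall>x. x \<notin> A \<longrightarrow> f x = d)} = (\<Prod>x\<in>A. card (B x))"
proof -
  have "inj_on (\<lambda>f x. if x \<in> A then f x else d) (PiE A B)"
    by (rule inj_onI) (metis (mono_tags) PiE_ext)
  then show ?thesis
    unfolding funs_with_default_eq_image_PiE using assms by (simp add: card_image card_PiE)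
qed

lemma quotient_class_eq_Image:
  assumes "equiv A R" "C \<in> A // R" "x \<in> C"
  shows "C = R `` {x}"
proof (rule quotient_eqI[OF assms(1,2)])
  have "x \<in> A"
    using assms in_quotient_imp_subset by blast
  then show "R `` {x} \<in> A // R" "x \<in> R `` {x}"
    using equiv_class_self[OF assms(1)] by (auto intro: quotientI)
  then show "(x, x) \<in> R"
    by simp
qed (rule assms(3))

lemma Union_invariant_classes:
  assumes "equiv A R" "\<And>x y. (x, y) \<in> R \<Longrightarrow> P x \<Longrightarrow> P y"
  shows "\<Union>{C \<in> A // R. \<exists>x\<in>C. P x} = {x \<in> A. P x}"
proof (intro equalityI subsetI)
  fix y assume "y \<in> \<Union>{C \<in> A // R. \<exists>x\<in>C. P x}"
  then obtain C x where C: "C \<in> A // R" "y \<in> C" "x \<in> C" "P x"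
    by blast
  then have "(x, y) \<in> R"
    using quotient_class_eq_Image[OF assms(1) C(1,3)] by blast
  then show "y \<in> {x \<in> A. P x}"
    using assms C(4) equiv_type[OF assms(1)] by blast
next
  fix y assume y: "y \<in> {x \<in> A. P x}"
  then have "R `` {y} \<in> {C \<in> A // R. \<exists>x\<in>C. P x}"
    using equiv_class_self[OF assms(1)] quotientI by fastforce
  then show "y \<in> \<Union>{C \<in> A // R. \<exists>x\<in>C. P x}"
    using equiv_class_self[OF assms(1)] y by blast
qed

lemma card_Union_equiv_classes:
  assumes "equiv A R" "finite A" "N \<subseteq> A // R" "\<And>C. C \<in> N \<Longrightarrow> card C = k"
  shows "card (\<Union>N) = card N * k"
proof -
  have "pairwise disjnt N"
    using quotient_disj[OF assms(1)] assms(3) unfolding pairwise_def disjnt_def by blast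
  moreover have "finite C" if "C \<in> N" for C
    using that assms(2,3) in_quotient_imp_subset[OF assms(1)] finite_subset by blast
  ultimately have "card (\<Union>N) = sum card N"
    by (rule card_Union_disjoint)
  then show ?thesis
    using assms(4) by simp
qed

section \<open>Classes of tuples\<close>

lemma tuples_range: "r \<in> tuples p l \<Longrightarrow> i < l \<Longrightarrow> 0 \<le> r i \<and> r i < p"
  unfolding tuples_def by auto

lemma tuple_shift_eq_imp_eq:
  assumes "r \<in> tuples p l" "i < l" "j < l" "(r i + a) mod p = (r j + a) mod p"
  shows "i = j"
proof -
  have "[r i = r j] (mod p)"
    using assms(4) cong_add_rcancel unfolding cong_def by blast
  then have "r i = r j"
    using tuples_range[OF assms(1)] assms(2,3) cong_less_imp_eq_int by blast
  then show ?thesis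
    using assms(1-3) inj_onD[of r "{0..<l}" i j] unfolding tuples_def by auto
qed

lemma finite_tuples: "finite (tuples p l)"
proof (rule finite_subset)
  show "tuples p l \<subseteq> {r. (\<forall>i\<in>{..<l}. r i \<in> {0..<p}) \<and> (\<forall>i. i \<notin> {..<l} \<longrightarrow> r i = 0)}"
    unfolding tuples_def by auto
qed (rule finite_funs_with_default; simp)

lemma sym_tuple_rel: "sym (tuple_rel p l)"
proof (rule symI)
  fix r s assume "(r, s) \<in> tuple_rel p l"
  then obtain \<sigma> a where r: "r \<in> tuples p l" and s: "s \<in> tuples p l"
    and \<sigma>: "bij_betw \<sigma> {0..<l} {0..<l}" and s_eq: "\<forall>i<l. s i = (r (\<sigma> i) + a) mod p"
    unfolding tuple_rel_def by blast
  define \<tau> where "\<tau> = inv_into {0..<l} \<sigma>"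
  have \<tau>: "bij_betw \<tau> {0..<l} {0..<l}"
    unfolding \<tau>_def using \<sigma> by (rule bij_betw_inv_into)
  have "r i = (s (\<tau> i) + - a) mod p" if "i < l" for i
  proof -
    have "\<tau> i < l" "\<sigma> (\<tau> i) = i"
      using \<sigma> \<tau> that unfolding \<tau>_def by (auto simp: bij_betw_def bij_betw_inv_into_right)
    then have "(s (\<tau> i) + - a) mod p = ((r i + a) mod p + - a) mod p"
      using s_eq by simp
    also have "\<dots> = r i"
      using tuples_range[OF r that] by (simp add: mod_diff_left_eq)
    finally show ?thesis ..
  qed
  then show "(s, r) \<in> tuple_rel p l"
    unfolding tuple_rel_def using r s \<tau> by blast
qed

lemma trans_tuple_rel: "trans (tuple_rel p l)"
proof (rule transI)
  fix r s t assume "(r, s) \<in> tuple_rel p l" "(s, t) \<in> tuple_rel p l"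
  then obtain \<sigma> a \<tau> b where r: "r \<in> tuples p l" and t: "t \<in> tuples p l"
    and \<sigma>: "bij_betw \<sigma> {0..<l} {0..<l}" and s_eq: "\<forall>i<l. s i = (r (\<sigma> i) + a) mod p"
    and \<tau>: "bij_betw \<tau> {0..<l} {0..<l}" and t_eq: "\<forall>i<l. t i = (s (\<tau> i) + b) mod p"
    unfolding tuple_rel_def by blast
  have "t i = (r ((\<sigma> \<circ> \<tau>) i) + (a + b)) mod p" if "i < l" for i
  proof -
    have "\<tau> i < l"
      using \<tau> that by (auto simp: bij_betw_def)
    then show ?thesis
      using s_eq t_eq that by (simp add: mod_add_left_eq add.assoc)
  qed
  moreover have "bij_betw (\<sigma> \<circ> \<tau>) {0..<l} {0..<l}"
    using \<tau> \<sigma> by (rule bij_betw_trans)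
  ultimately show "(r, t) \<in> tuple_rel p l"
    unfolding tuple_rel_def using r t by blast
qed

lemma equiv_tuple_rel: "equiv (tuples p l) (tuple_rel p l)"
proof (rule equivI)
  show "refl_on (tuples p l) (tuple_rel p l)"
  proof (rule refl_onI)
    fix r assume r: "r \<in> tuples p l"
    then have "\<forall>i<l. r i = (r (id i) + 0) mod p"
      using tuples_range by simp
    then show "(r, r) \<in> tuple_rel p l"
      unfolding tuple_rel_def using r bij_betw_id by blast
  qed
next
  show "tuple_rel p l \<subseteq> tuples p l \<times> tuples p l"
    unfolding tuple_rel_def by auto
qed (rule sym_tuple_rel, rule trans_tuple_rel)

lemma translation_invariant_residues:
  fixes p b w :: int
  assumes "coprime b p" "p > 0" "R \<subseteq> {0..<p}" "w \<in> R" "\<And>v. v \<in> R \<Longrightarrow> (v + b) mod p \<in> R"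
  shows "R = {0..<p}"
proof (intro equalityI subsetI)
  have orbit: "(w + int m * b) mod p \<in> R" for m
  proof (induction m)
    case 0
    show ?case
      using assms(3,4) by auto
  next
    case (Suc m)
    have "(w + int (Suc m) * b) mod p = ((w + int m * b) + b) mod p"
      by (simp add: algebra_simps)
    also have "\<dots> = ((w + int m * b) mod p + b) mod p"
      by (simp add: mod_add_left_eq)
    finally have "(w + int (Suc m) * b) mod p = ((w + int m * b) mod p + b) mod p" .
    then show ?case
      using assms(5)[OF Suc.IH] by simp
  qed
  fix t assume t: "t \<in> {0..<p}"
  obtain z where z: "[b * z = 1] (mod p)"
    using cong_solve_coprime_int[OF assms(1)] by blast
  define m where "m = nat ((z * (t - w)) mod p)"
  have "[int m = z * (t - w)] (mod p)"
    using assms(2) by (simp add: m_def cong_def)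
  then have "[int m * b = z * (t - w) * b] (mod p)"
    by (rule cong_mult) (rule cong_refl)
  then have "[w + int m * b = w + (b * z) * (t - w)] (mod p)"
    by (simp add: cong_add_lcancel ac_simps)
  also have "[w + (b * z) * (t - w) = w + 1 * (t - w)] (mod p)"
    using z by (intro cong_add cong_mult cong_refl)
  finally have "(w + int m * b) mod p = t"
    using t by (simp add: cong_def)
  then show "t \<in> R"
    using orbit by metis
qed (use assms(3) in blast)

definition shift_permute :: "int \<Rightarrow> nat \<Rightarrow> (nat \<Rightarrow> nat) \<Rightarrow> int \<Rightarrow> (nat \<Rightarrow> int) \<Rightarrow> nat \<Rightarrow> int" where
  "shift_permute p l \<sigma> a r = (\<lambda>i. if i < l then (r (\<sigma> i) + a) mod p else 0)"

lemma tuple_class_eq_image: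
  fixes p :: int
  assumes "p > 0" "r \<in> tuples p l"
  shows "tuple_rel p l `` {r} =
    (\<lambda>(\<sigma>, a). shift_permute p l \<sigma> a r) ` ({\<sigma>. \<sigma> permutes {0..<l}} \<times> {0..<p})"
proof (intro equalityI subsetI)
  fix s assume "s \<in> tuple_rel p l `` {r}"
  then obtain \<sigma> a where s: "s \<in> tuples p l"
    and \<sigma>: "bij_betw \<sigma> {0..<l} {0..<l}" and s_eq: "\<forall>i<l. s i = (r (\<sigma> i) + a) mod p"
    unfolding tuple_rel_def by blast
  define \<sigma>' where "\<sigma>' i = (if i < l then \<sigma> i else i)" for i
  have "bij_betw \<sigma>' {0..<l} {0..<l}"
    using \<sigma> bij_betw_cong[of "{0..<l}" \<sigma>' \<sigma>] by (simp add: \<sigma>'_def)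
  then have "\<sigma>' permutes {0..<l}"
    by (rule bij_imp_permutes) (simp add: \<sigma>'_def)
  moreover have "s = shift_permute p l \<sigma>' (a mod p) r"
    using s s_eq unfolding shift_permute_def \<sigma>'_def tuples_def by (auto simp: mod_add_right_eq)
  ultimately show "s \<in> (\<lambda>(\<sigma>, a). shift_permute p l \<sigma> a r) ` ({\<sigma>. \<sigma> permutes {0..<l}} \<times> {0..<p})"
    using assms(1) by force
next
  fix s assume "s \<in> (\<lambda>(\<sigma>, a). shift_permute p l \<sigma> a r) ` ({\<sigma>. \<sigma> permutes {0..<l}} \<times> {0..<p})"
  then obtain \<sigma> a where \<sigma>: "\<sigma> permutes {0..<l}" and s: "s = shift_permute p l \<sigma> a r"
    by auto
  have s_eq: "\<forall>i<l. s i = (r (\<sigma> i) + a) mod p"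
    by (simp add: s shift_permute_def)
  have "inj_on s {0..<l}"
  proof (rule inj_onI)
    fix i j assume ij: "i \<in> {0..<l}" "j \<in> {0..<l}" "s i = s j"
    moreover have "\<sigma> i < l" "\<sigma> j < l"
      using ij permutes_in_image[OF \<sigma>] by auto
    ultimately have "\<sigma> i = \<sigma> j"
      using s_eq tuple_shift_eq_imp_eq[OF assms(2)] by simp
    then show "i = j"
      using permutes_inj[OF \<sigma>] by (simp add: inj_eq)
  qed
  then have "s \<in> tuples p l"
    using assms(1) s_eq unfolding tuples_def by (simp add: s shift_permute_def)
  then show "s \<in> tuple_rel p l `` {r}"
    using assms(2) permutes_imp_bij[OF \<sigma>] s_eq unfolding tuple_rel_def by blast
qed

lemma shift_permute_eq_imp_image_translation_closed:
  assumes "r \<in> tuples p l" "\<sigma>1 permutes {0..<l}" "\<sigma>2 permutes {0..<l}"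
    and eq: "shift_permute p l \<sigma>1 a1 r = shift_permute p l \<sigma>2 a2 r"
    and v: "v \<in> r ` {0..<l}"
  shows "(v + (a1 - a2)) mod p \<in> r ` {0..<l}"
proof -
  obtain k where k: "k < l" "v = r k"
    using v by auto
  have "k \<in> \<sigma>1 ` {0..<l}"
    using k(1) permutes_image[OF assms(2)] by simp
  then obtain i where i: "i < l" "\<sigma>1 i = k"
    by auto
  have "\<sigma>2 i < l"
    using i(1) permutes_in_image[OF assms(3)] by simp
  have "(v + (a1 - a2)) mod p = ((r (\<sigma>1 i) + a1) mod p - a2) mod p"
    using i k by (simp add: mod_diff_left_eq algebra_simps)
  also have "\<dots> = ((r (\<sigma>2 i) + a2) mod p - a2) mod p"
    using fun_cong[OF eq, of i] i(1) by (simp add: shift_permute_def)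
  also have "\<dots> = r (\<sigma>2 i)"
    using tuples_range[OF assms(1) \<open>\<sigma>2 i < l\<close>] by (simp add: mod_diff_left_eq)
  finally show ?thesis
    using \<open>\<sigma>2 i < l\<close> by simp
qed

lemma inj_on_shift_permute:
  fixes p :: int
  assumes "prime p" "r \<in> tuples p l" "l > 0" "r ` {0..<l} \<noteq> {0..<p}"
  shows "inj_on (\<lambda>(\<sigma>, a). shift_permute p l \<sigma> a r) ({\<sigma>. \<sigma> permutes {0..<l}} \<times> {0..<p})"
proof (rule inj_onI, clarsimp)
  fix \<sigma>1 a1 \<sigma>2 a2
  assume \<sigma>1: "\<sigma>1 permutes {0..<l}" and \<sigma>2: "\<sigma>2 permutes {0..<l}"
    and a: "0 \<le> a1" "a1 < p" "0 \<le> a2" "a2 < p"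
    and eq: "shift_permute p l \<sigma>1 a1 r = shift_permute p l \<sigma>2 a2 r"
  have "a1 = a2"
  proof (rule ccontr)
    assume "a1 \<noteq> a2"
    then have "\<not> p dvd a1 - a2"
      using a cong_less_imp_eq_int cong_iff_dvd_diff by blast
    then have "coprime (a1 - a2) p"
      using prime_imp_coprime[OF assms(1)] coprime_commute by blast
    then have "r ` {0..<l} = {0..<p}"
      using assms(3) tuples_range[OF assms(2)] prime_gt_0_int[OF assms(1)]
        shift_permute_eq_imp_image_translation_closed[OF assms(2) \<sigma>1 \<sigma>2 eq]
      by (intro translation_invariant_residues[where w = "r 0"]) auto
    then show False
      using assms(4) by contradiction
  qed
  moreover have "\<sigma>1 i = \<sigma>2 i" for i
  proof (cases "i < l")
    case True
    then have "(r (\<sigma>1 i) + a1) mod p = (r (\<sigma>2 i) + a1) mod p"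
      using fun_cong[OF eq, of i] \<open>a1 = a2\<close> by (simp add: shift_permute_def)
    moreover have "\<sigma>1 i < l" "\<sigma>2 i < l"
      using True permutes_in_image[OF \<sigma>1] permutes_in_image[OF \<sigma>2] by auto
    ultimately show ?thesis
      using tuple_shift_eq_imp_eq[OF assms(2)] by blast
  qed (simp add: permutes_not_in[OF \<sigma>1] permutes_not_in[OF \<sigma>2])
  ultimately show "\<sigma>1 = \<sigma>2 \<and> a1 = a2"
    by auto
qed

lemma card_tuple_class:
  fixes p :: int
  assumes "prime p" "r \<in> tuples p l" "l > 0" "r ` {0..<l} \<noteq> {0..<p}"
  shows "card (tuple_rel p l `` {r}) = fact l * nat p"
proof -
  have "card (tuple_rel p l `` {r}) = card ({\<sigma>. \<sigma> permutes {0..<l}} \<times> {0..<p})"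
    using tuple_class_eq_image[OF prime_gt_0_int[OF assms(1)] assms(2)]
      card_image[OF inj_on_shift_permute[OF assms]] by simp
  then show ?thesis
    by (simp add: card_cartesian_product card_permutations)
qed

section \<open>Paley cliques\<close>

definition paley_clique :: "int \<Rightarrow> nat \<Rightarrow> (nat \<Rightarrow> int) \<Rightarrow> bool" where
  "paley_clique p l r \<longleftrightarrow> r \<in> tuples p l \<and> (\<forall>i<l. \<forall>j<l. i \<noteq> j \<longrightarrow> QuadRes p (r i - r j))"

lemma tuples_diff_not_dvd:
  assumes "r \<in> tuples p l" "i < l" "j < l" "i \<noteq> j"
  shows "\<not> p dvd r i - r j"
  using tuple_shift_eq_imp_eq[OF assms(1-3), of 0] assms(4) by (auto simp: mod_eq_dvd_iff)

lemma graph_iso_complete_graph_iff: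
  assumes "r \<in> tuples p l"
  shows "graph_iso l (tuple_graph p r) complete_graph \<longleftrightarrow> paley_clique p l r"
proof
  assume "graph_iso l (tuple_graph p r) complete_graph"
  then obtain f :: "nat \<Rightarrow> nat" where f: "inj_on f {0..<l}"
    and edges: "\<forall>i\<in>{0..<l}. \<forall>j\<in>{0..<l}. tuple_graph p r i j \<longleftrightarrow> f i \<noteq> f j"
    unfolding graph_iso_def complete_graph_def bij_betw_def by blast
  have "tuple_graph p r i j" if "i < l" "j < l" "i \<noteq> j" for i j
    using edges inj_on_eq_iff[OF f] that by simp
  then show "paley_clique p l r"
    using assms unfolding paley_clique_def tuple_graph_def by blast
next
  assume "paley_clique p l r"
  then have "\<forall>i\<in>{0..<l}. \<forall>j\<in>{0..<l}. tuple_graph p r i j \<longleftrightarrow> complete_graph (id i) (id j)"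
    using tuples_diff_not_dvd[OF assms]
    unfolding paley_clique_def tuple_graph_def complete_graph_def by auto
  then show "graph_iso l (tuple_graph p r) complete_graph"
    unfolding graph_iso_def using bij_betw_id by blast
qed

lemma tuple_rel_preserves_paley_clique:
  assumes "(r, s) \<in> tuple_rel p l" "paley_clique p l r"
  shows "paley_clique p l s"
proof -
  obtain \<sigma> a where s: "s \<in> tuples p l"
    and \<sigma>: "bij_betw \<sigma> {0..<l} {0..<l}" and s_eq: "\<forall>i<l. s i = (r (\<sigma> i) + a) mod p"
    using assms(1) unfolding tuple_rel_def by blast
  have "QuadRes p (s i - s j)" if ij: "i < l" "j < l" "i \<noteq> j" for i j
  proof -
    have "\<sigma> i < l" "\<sigma> j < l" "\<sigma> i \<noteq> \<sigma> j"
      using \<sigma> ij by (auto simp: bij_betw_def inj_on_eq_iff)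
    then have "QuadRes p (r (\<sigma> i) - r (\<sigma> j))"
      using assms(2) unfolding paley_clique_def by blast
    moreover have "[r (\<sigma> i) - r (\<sigma> j) = s i - s j] (mod p)"
      using s_eq ij by (simp add: cong_def mod_diff_eq)
    ultimately show ?thesis
      by (rule QuadRes_cong)
  qed
  then show ?thesis
    using s unfolding paley_clique_def by blast
qed

lemma paley_clique_image_ne_residues:
  fixes p :: int
  assumes "prime p" "p > 2" "paley_clique p l r"
  shows "r ` {0..<l} \<noteq> {0..<p}"
proof
  assume onto: "r ` {0..<l} = {0..<p}"
  obtain n where n: "0 < n" "n < p" "\<not> QuadRes p n"
    using ex_not_QuadRes[OF assms(1,2)] by blast
  have "n \<in> r ` {0..<l}" "0 \<in> r ` {0..<l}"
    using onto n(1,2) by auto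
  then obtain i j where ij: "i < l" "j < l" "r i = n" "r j = 0"
    by auto
  moreover have "i \<noteq> j"
    using ij n(1) by auto
  ultimately have "QuadRes p (r i - r j)"
    using assms(3) unfolding paley_clique_def by blast
  then show False
    using ij n(3) by simp
qed

lemma card_paley_cliques:
  fixes p :: int
  assumes "prime p" "p > 2" "l > 0"
  shows "card {r. paley_clique p l r} = n_p p l complete_graph * (fact l * nat p)"
proof -
  define N where "N = {C \<in> tuples p l // tuple_rel p l. \<exists>r\<in>C. paley_clique p l r}"
  have in_tuples: "r \<in> tuples p l" if "C \<in> tuples p l // tuple_rel p l" "r \<in> C" for C r
    using that in_quotient_imp_subset[OF equiv_tuple_rel] by blast
  have "n_p p l complete_graph = card N"
    unfolding n_p_def N_def
  proof (intro arg_cong[where f = card] Collect_cong conj_cong refl bex_cong)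
    fix C r assume "C \<in> tuples p l // tuple_rel p l" "r \<in> C"
    then show "graph_iso l (tuple_graph p r) complete_graph \<longleftrightarrow> paley_clique p l r"
      using graph_iso_complete_graph_iff in_tuples by blast
  qed
  moreover have "{r \<in> tuples p l. paley_clique p l r} = {r. paley_clique p l r}"
    by (auto simp: paley_clique_def)
  then have "\<Union>N = {r. paley_clique p l r}"
    unfolding N_def using Union_invariant_classes[OF equiv_tuple_rel tuple_rel_preserves_paley_clique]
    by simp
  moreover have "card (\<Union>N) = card N * (fact l * nat p)"
  proof (rule card_Union_equiv_classes[OF equiv_tuple_rel finite_tuples])
    show "N \<subseteq> tuples p l // tuple_rel p l"
      unfolding N_def by blast
  next
    fix C assume "C \<in> N"
    then obtain r where r: "C \<in> tuples p l // tuple_rel p l" "r \<in> C" "paley_clique p l r"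
      unfolding N_def by blast
    then have "r ` {0..<l} \<noteq> {0..<p}"
      using paley_clique_image_ne_residues[OF assms(1,2)] by blast
    then show "card C = fact l * nat p"
      using card_tuple_class[OF assms(1) in_tuples[OF r(1,2)] assms(3)]
        quotient_class_eq_Image[OF equiv_tuple_rel r(1,2)] by simp
  qed
  ultimately show ?thesis
    by simp
qed

section \<open>The variety Y_0\<close>

definition Y0_fibre :: "int \<Rightarrow> nat \<Rightarrow> (nat \<Rightarrow> int) \<Rightarrow> (nat \<Rightarrow> nat \<Rightarrow> int) set" where
  "Y0_fibre p l r = {y.
      (\<forall>i j. j < i \<and> i < l \<longrightarrow>
         y i j \<in> {0..<p} \<and> [r i - r j = (y i j)^2] (mod p) \<and> \<not> [y i j = 0] (mod p)) \<and>
      (\<forall>i j. \<not> (j < i \<and> i < l) \<longrightarrow> y i j = 0)}"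

lemma card_Y0_fibre:
  fixes p :: int
  assumes "prime p" "p > 2"
    and diffs: "\<And>i j. j < i \<Longrightarrow> i < l \<Longrightarrow> QuadRes p (r i - r j) \<and> \<not> p dvd (r i - r j)"
  shows "card (Y0_fibre p l r) = 2 ^ (l * (l - 1) div 2)"
proof -
  define P where "P = {(i, j). j < i \<and> i < l}"
  define roots where "roots c = {y \<in> {0..<p}. [c = y^2] (mod p) \<and> \<not> [y = 0] (mod p)}" for c
  define F where "F = {f. (\<forall>x\<in>P. f x \<in> (\<lambda>(i, j). roots (r i - r j)) x) \<and> (\<forall>x. x \<notin> P \<longrightarrow> f x = 0)}"
  have "finite P"
    unfolding P_def by (rule finite_subset[of _ "{..<l} \<times> {..<l}"]) auto
  have "Y0_fibre p l r = curry ` F"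
  proof (intro equalityI subsetI)
    fix y assume "y \<in> Y0_fibre p l r"
    then have "case_prod y \<in> F"
      unfolding Y0_fibre_def F_def P_def roots_def by auto
    then show "y \<in> curry ` F"
      by (metis curry_case_prod image_eqI)
  qed (auto simp: Y0_fibre_def F_def P_def roots_def)
  then have "card (Y0_fibre p l r) = card F"
    by (simp add: card_image inj_on_def curry_def fun_eq_iff)
  also have "\<dots> = (\<Prod>x\<in>P. card ((\<lambda>(i, j). roots (r i - r j)) x))"
    unfolding F_def using \<open>finite P\<close> by (rule card_funs_with_default)
  also have "\<dots> = (\<Prod>x\<in>P. 2)"
  proof (rule prod.cong[OF refl])
    fix x assume "x \<in> P"
    then obtain i j where x: "x = (i, j)" "j < i" "i < l"
      unfolding P_def by blast
    have "roots (r i - r j) = {y \<in> {0..<p}. [y^2 = r i - r j] (mod p)}"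
      using diffs[OF x(2,3)] unfolding roots_def
      by (auto simp: cong_sym_eq cong_0_iff power2_eq_square dest: cong_dvd_iff)
    then show "card ((\<lambda>(i, j). roots (r i - r j)) x) = 2"
      using card_square_roots_mod_prime[OF assms(1,2)] diffs[OF x(2,3)] x(1) by simp
  qed
  also have "\<dots> = 2 ^ (l * (l - 1) div 2)"
    using card_pairs_below[of l] by (simp add: P_def)
  finally show ?thesis .
qed

lemma paley_clique_if_Y0_fibre:
  fixes p :: int
  assumes "prime p" "QuadRes p (-1)"
    and r: "\<forall>i<l. r i \<in> {0..<p}" "\<forall>i\<ge>l. r i = 0" and y: "y \<in> Y0_fibre p l r"
  shows "paley_clique p l r"
proof -
  have below: "QuadRes p (r i - r j) \<and> \<not> p dvd r i - r j" if "j < i" "i < l" for i j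
  proof -
    have root: "[(y i j)^2 = r i - r j] (mod p)" and "\<not> p dvd y i j"
      using y that unfolding Y0_fibre_def cong_0_iff by (auto simp: cong_sym_eq)
    then have "\<not> p dvd (y i j)^2"
      using assms(1) by (simp add: prime_dvd_power_iff)
    then show ?thesis
      using root cong_dvd_iff unfolding QuadRes_def by blast
  qed
  have QR: "QuadRes p (r i - r j)" if "i < l" "j < l" "i \<noteq> j" for i j
  proof (cases "j < i")
    case False
    then have "i < j"
      using that(3) by simp
    then have "QuadRes p ((-1) * (r j - r i))"
      using below[OF _ that(2)] QuadRes_mult[OF assms(2)] by blast
    then show ?thesis
      by simp
  qed (use below that in blast)
  have "inj_on r {0..<l}"
  proof (rule inj_onI)
    fix i j assume "i \<in> {0..<l}" "j \<in> {0..<l}" "r i = r j"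
    then show "i = j"
      using below[of j i] below[of i j] by (cases i j rule: linorder_cases) auto
  qed
  then show ?thesis
    using r QR unfolding paley_clique_def tuples_def by blast
qed

lemma Y0_points_eq_Sigma:
  fixes p :: int
  assumes "prime p" "QuadRes p (-1)"
  shows "Y0_points p l = Sigma {r. paley_clique p l r} (Y0_fibre p l)"
proof (intro equalityI subsetI)
  fix x assume "x \<in> Y0_points p l"
  then obtain r y where "x = (r, y)" "\<forall>i<l. r i \<in> {0..<p}" "\<forall>i\<ge>l. r i = 0" "y \<in> Y0_fibre p l r"
    unfolding Y0_points_def Y0_fibre_def by auto
  then show "x \<in> Sigma {r. paley_clique p l r} (Y0_fibre p l)"
    using paley_clique_if_Y0_fibre[OF assms] by blast
next
  fix x assume "x \<in> Sigma {r. paley_clique p l r} (Y0_fibre p l)"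
  then show "x \<in> Y0_points p l"
    unfolding Y0_points_def Y0_fibre_def paley_clique_def tuples_def by auto
qed

lemma card_Y0_points:
  fixes p :: int
  assumes "prime p" "p > 2" "QuadRes p (-1)"
  shows "card (Y0_points p l) = card {r. paley_clique p l r} * 2 ^ (l * (l - 1) div 2)"
proof -
  have fibre: "card (Y0_fibre p l r) = 2 ^ (l * (l - 1) div 2)" if "paley_clique p l r" for r
    using that tuples_diff_not_dvd
    by (intro card_Y0_fibre[OF assms(1,2)]) (auto simp: paley_clique_def)
  have "finite {r. paley_clique p l r}"
    by (rule finite_subset[OF _ finite_tuples]) (auto simp: paley_clique_def)
  moreover have "finite (Y0_fibre p l r)" if "paley_clique p l r" for r
    using fibre[OF that] by (intro card_ge_0_finite) simp
  ultimately show ?thesis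
    unfolding Y0_points_eq_Sigma[OF assms(1,3)] using fibre by simp
qed

theorem mainTheorem4:
  fixes p :: int and l :: nat
  assumes "prime p" and "[p = 1] (mod 4)" and "l \<ge> 2"
  shows "real (n_p p l complete_graph) =
     real (card (Y0_points p l)) / (2 ^ (l * (l - 1) div 2) * fact l * real_of_int p)"
proof -
  have "p > 2"
    using assms(1,2) prime_ge_2_int[OF assms(1)] by (cases "p = 2") (auto simp: cong_def)
  have "card (Y0_points p l) = n_p p l complete_graph * (fact l * nat p) * 2 ^ (l * (l - 1) div 2)"
    using card_Y0_points[OF assms(1) \<open>p > 2\<close> QuadRes_minus_one[OF assms(1,2)]]
      card_paley_cliques[OF assms(1) \<open>p > 2\<close>] assms(3) by simp
  then show ?thesis
    using \<open>p > 2\<close> by simp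
qed

end
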